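(* Let $p_0,p_1,p_2\in\mathbb{Z}^2$ be such that $P:=\operatorname{conv}\{p_0,p_1,p_2\}$ is a triangle whose only integer points are $p_0,p_1,p_2$. Let $Q:=\operatorname{conv}\{q_0,q_1,q_2\}$ be a triangle with $p_i=(1-x_i)q_{i+1}+x_iq_{i+2}$ for $i=0,1,2$ (indices modulo $3$), where $0<x_i<1$. Then: (I) $Q$ is a maximal lattice-free triangle of type 3 if and only if either (a) $x_i+x_j>1$ for all $0\le i<j\le2$, or (b) $x_i+x_j<1$ for all $0\le i<j\le 2$. (II) If (a) holds, then $w(Q)=\dfrac{\min\{x_0,x_1,x_2\}}{x_0x_1x_2+(1-x_0)(1-x_1)(1-x_2)}$. (III) If (a) holds, then $w(Q)\le1+\frac{2}{\sqrt3}$, with equality if and only if $x_0=x_1=x_2=\frac1{\sqrt3}$.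
   Context: A closed convex set in $\mathbb{R}^2$ with non-empty interior is lattice-free if its interior contains no point of $\mathbb{Z}^2$, and maximal lattice-free if it is lattice-free and not properly contained in another lattice-free closed convex set with non-empty interior. A maximal lattice-free triangle of type 3 is a maximal lattice-free triangle having exactly three integer points on its boundary, one in the relative interior of each edge. For $u\in\mathbb{R}^2$, $w(Q,u):=\max_{x\in Q}u^\top x-\min_{x\in Q}u^\top x$ and the lattice width is $w(Q):=\min\{w(Q,u):u\in\mathbb{Z}^2\setminus\{o\}\}$. *)

theory Defs
  imports "HOL-Analysis.Analysis"
begin

definition int_pt :: "real \<times> real \<Rightarrow> bool" where
  "int_pt z \<longleftrightarrow> fst z \<in> \<int> \<and> snd z \<in> \<int>"

definition lattice_free :: "(real \<times> real) set \<Rightarrow> bool" where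
  "lattice_free K \<longleftrightarrow> closed K \<and> convex K \<and> interior K \<noteq> {} \<and>
     (\<forall>z. int_pt z \<longrightarrow> z \<notin> interior K)"

definition max_lattice_free :: "(real \<times> real) set \<Rightarrow> bool" where
  "max_lattice_free K \<longleftrightarrow> lattice_free K \<and>
     (\<forall>K'. lattice_free K' \<and> K \<subseteq> K' \<longrightarrow> K' = K)"

definition max_lf_triangle_type3 :: "(real \<times> real) set \<Rightarrow> bool" where
  "max_lf_triangle_type3 Q \<longleftrightarrow> max_lattice_free Q \<and>
     (\<exists>a b c. \<not> collinear {a, b, c} \<and> Q = convex hull {a, b, c} \<and>
        card {z. int_pt z \<and> z \<in> frontier Q} = 3 \<and>
        (\<exists>z. int_pt z \<and> z \<in> open_segment a b) \<and>
        (\<exists>z. int_pt z \<and> z \<in> open_segment b c) \<and>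
        (\<exists>z. int_pt z \<and> z \<in> open_segment c a))"

definition width_dir :: "(real \<times> real) set \<Rightarrow> real \<times> real \<Rightarrow> real" where
  "width_dir Q u = (SUP x\<in>Q. u \<bullet> x) - (INF x\<in>Q. u \<bullet> x)"

definition lattice_width :: "(real \<times> real) set \<Rightarrow> real" where
  "lattice_width Q = (INF u\<in>{u. int_pt u \<and> u \<noteq> 0}. width_dir Q u)"

end

theory Submission
  imports Defs
begin

text \<open>Describe every point by its barycentric coordinates \<open>lam\<close> with respect to \<open>P\<close> and
  \<open>mu\<close> with respect to \<open>Q\<close>. Since \<open>P\<close> contains no other lattice points, it is unimodular, so
  the lattice points are exactly the points with integral \<open>lam\<close>, and \<open>mu\<close> is an affine
  function of \<open>lam\<close> with coefficients in \<open>x0, x1, x2\<close>. Under (a) or (b) no lattice point of \<open>Q\<close>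
  has a negative \<open>lam\<close>-coordinate, so \<open>p0, p1, p2\<close> are the only lattice points of \<open>Q\<close>; and
  any convex set properly containing \<open>Q\<close> reaches beyond some edge, which puts the lattice point
  of that edge into its interior. If neither (a) nor (b) holds, one of the points
  \<open>pj + pk - pi\<close> is a fourth lattice point of \<open>Q\<close>.

  For the width, \<open>u \<mapsto> (u \<bullet> (p1 - p0), u \<bullet> (p2 - p0))\<close> is a bijection of the nonzero
  integer vectors, and the differences \<open>u \<bullet> qi - u \<bullet> qj\<close> are explicit linear forms in
  these two integers divided by \<open>x0 x1 x2 + (1 - x0) (1 - x1) (1 - x2)\<close>. Under (a) the largest
  of them is at least \<open>min x0 x1 x2\<close> with equality for one of \<open>(1, 0)\<close>, \<open>(0, 1)\<close>, \<open>(1, 1)\<close>.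
  The bound \<open>1 + 2 / sqrt 3\<close> is then an inequality in the smallest \<open>xi\<close> and the other two.\<close>

section \<open>Planar determinants and barycentric coordinates\<close>

definition det2 :: "real \<times> real \<Rightarrow> real \<times> real \<Rightarrow> real" where
  "det2 a b = fst a * snd b - snd a * fst b"

lemma collinear_if_det2_eq_0:
  assumes "det2 b c = 0"
  shows "collinear {0, b, c}"
proof -
  consider "b = 0" | "fst b \<noteq> 0" | "snd b \<noteq> 0"
    by (auto simp: prod_eq_iff)
  then show ?thesis
  proof cases
    case 2
    then have "c = (fst c / fst b) *\<^sub>R b"
      using assms by (auto simp: det2_def prod_eq_iff field_simps)
    then show ?thesis
      unfolding collinear_lemma by blast
  next
    case 3
    then have "c = (snd c / snd b) *\<^sub>R b"
      using assms by (auto simp: det2_def prod_eq_iff field_simps)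
    then show ?thesis
      unfolding collinear_lemma by blast
  qed (simp add: collinear_lemma)
qed

lemma det2_neq_0_if_not_collinear:
  assumes "\<not> collinear {a, b, c}"
  shows "det2 (b - a) (c - a) \<noteq> 0"
proof
  assume "det2 (b - a) (c - a) = 0"
  then have "collinear {b, a, c}"
    by (subst collinear_3) (simp_all add: collinear_if_det2_eq_0)
  with assms show False
    by (simp add: insert_commute)
qed

lemma det2_neq_0_imp_independent:
  assumes "det2 b c \<noteq> 0" "s *\<^sub>R b + t *\<^sub>R c = 0"
  shows "s = 0" "t = 0"
proof -
  have "s * det2 b c = det2 (s *\<^sub>R b + t *\<^sub>R c) c"
    by (simp add: det2_def algebra_simps)
  also have "\<dots> = 0"
    unfolding assms(2) by (simp add: det2_def)
  finally show "s = 0"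
    using assms(1) by simp
  have "t * det2 b c = det2 b (s *\<^sub>R b + t *\<^sub>R c)"
    by (simp add: det2_def algebra_simps)
  also have "\<dots> = 0"
    unfolding assms(2) by (simp add: det2_def)
  finally show "t = 0"
    using assms(1) by simp
qed

lemma det2_cramer: "det2 b c *\<^sub>R a = det2 a c *\<^sub>R b + det2 b a *\<^sub>R c"
  by (simp add: det2_def prod_eq_iff algebra_simps)

lemma barycentric_coords_unique:
  fixes a b c :: "real \<times> real"
  assumes "\<not> collinear {a, b, c}" "r + s + t = 1" "r' + s' + t' = 1"
    and "r *\<^sub>R a + s *\<^sub>R b + t *\<^sub>R c = r' *\<^sub>R a + s' *\<^sub>R b + t' *\<^sub>R c"
  shows "r = r'" "s = s'" "t = t'"
proof -
  have "r = 1 - s - t" "r' = 1 - s' - t'"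
    using assms(2,3) by simp_all
  with assms(4) have "(s - s') *\<^sub>R (b - a) + (t - t') *\<^sub>R (c - a) = 0"
    by (simp add: algebra_simps)
  from det2_neq_0_imp_independent[OF det2_neq_0_if_not_collinear[OF assms(1)] this]
  show "s = s'" "t = t'" by simp_all
  with assms(2,3) show "r = r'" by simp
qed

lemma int_pt_add: "int_pt a \<Longrightarrow> int_pt b \<Longrightarrow> int_pt (a + b)"
  by (simp add: int_pt_def)

lemma int_pt_diff: "int_pt a \<Longrightarrow> int_pt b \<Longrightarrow> int_pt (a - b)"
  by (simp add: int_pt_def)

lemma int_pt_scaleR: "k \<in> \<int> \<Longrightarrow> int_pt a \<Longrightarrow> int_pt (k *\<^sub>R a)"
  by (simp add: int_pt_def)

lemma inner_int_pt_Ints: "int_pt u \<Longrightarrow> int_pt a \<Longrightarrow> u \<bullet> a \<in> \<int>"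
  by (simp add: int_pt_def inner_prod_def)

lemma abs_eq_1_if_inverse_Ints:
  fixes d :: real
  assumes "d \<in> \<int>" "1 / d \<in> \<int>" "d \<noteq> 0"
  shows "\<bar>d\<bar> = 1"
proof -
  obtain k m where k: "d = of_int k" and m: "1 / d = of_int m"
    using assms(1,2) by (auto elim!: Ints_cases)
  have "of_int (k * m) = (1 :: real)"
    using assms(3) by (simp add: k[symmetric] m[symmetric])
  then have "k * m = 1"
    by (simp only: of_int_eq_1_iff)
  then show ?thesis
    by (simp add: k zmult_eq_1_iff abs_if) linarith
qed

text \<open>The nonnegativity of the integer \<open>P\<close>-coordinates of a lattice point of \<open>Q\<close>: the two
  inequalities are the \<open>Q\<close>-coordinates in which \<open>l0\<close> occurs.\<close>

lemma lattice_coord_nonneg: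
  fixes l0 l1 l2 :: int and x0 x1 x2 :: real
  assumes "l0 + l1 + l2 = 1" "0 < x0" "x0 < 1" "x1 < 1" "0 < x2"
    and "0 \<le> x2 * l2 + (1 - x0) * l0" "0 \<le> x0 * l0 + (1 - x1) * l1"
    and "(x0 + x1 > 1 \<and> x0 + x2 > 1) \<or> (x0 + x1 < 1 \<and> x0 + x2 < 1)"
  shows "0 \<le> l0"
proof (rule ccontr)
  assume "\<not> 0 \<le> l0"
  then have neg: "real_of_int l0 < 0"
    by simp
  from assms(8) have "1 \<le> l0 + l1 \<and> 1 \<le> l2 \<or> 1 \<le> l0 + l2 \<and> 1 \<le> l1"
  proof
    assume "x0 + x1 > 1 \<and> x0 + x2 > 1"
    then have "x0 * l0 < (1 - x1) * l0"
      using neg by (intro mult_strict_right_mono_neg) auto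
    with assms(7) have "0 < (1 - x1) * of_int (l0 + l1)"
      by (simp add: distrib_left)
    then have "1 \<le> l0 + l1"
      using assms(4) by (simp add: zero_less_mult_iff)
    moreover have "(1 - x0) * l0 < 0"
      using assms(3) neg by (intro mult_pos_neg) auto
    with assms(6) have "0 < x2 * l2"
      by linarith
    then have "1 \<le> l2"
      using assms(5) by (simp add: zero_less_mult_iff)
    ultimately show ?thesis
      by simp
  next
    assume "x0 + x1 < 1 \<and> x0 + x2 < 1"
    then have "(1 - x0) * l0 < x2 * l0"
      using neg by (intro mult_strict_right_mono_neg) auto
    with assms(6) have "0 < x2 * of_int (l0 + l2)"
      by (simp add: distrib_left)
    then have "1 \<le> l0 + l2"
      using assms(5) by (simp add: zero_less_mult_iff)
    moreover have "x0 * l0 < 0"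
      using assms(2) neg by (intro mult_pos_neg) auto
    with assms(7) have "0 < (1 - x1) * l1"
      by linarith
    then have "1 \<le> l1"
      using assms(4) by (simp add: zero_less_mult_iff)
    ultimately show ?thesis
      by simp
  qed
  with assms(1) show False
    by linarith
qed

lemma open_segment_extrapolation:
  fixes p y :: "'a :: real_vector"
  assumes "0 < t" "p \<noteq> y"
  shows "p \<in> open_segment ((1 + t) *\<^sub>R p - t *\<^sub>R y) y"
proof -
  define u where "u = t / (1 + t)"
  have "(1 - u) *\<^sub>R ((1 + t) *\<^sub>R p - t *\<^sub>R y) + u *\<^sub>R y
      = ((1 - u) * (1 + t)) *\<^sub>R p + (u - (1 - u) * t) *\<^sub>R y"
    by (simp add: algebra_simps)
  also have "\<dots> = p"
    using assms(1) by (simp add: u_def field_simps)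
  finally have "(1 - u) *\<^sub>R ((1 + t) *\<^sub>R p - t *\<^sub>R y) + u *\<^sub>R y = p" .
  moreover have "0 < u" "u < 1"
    using assms(1) by (simp_all add: u_def)
  moreover have "(1 + t) *\<^sub>R p - t *\<^sub>R y \<noteq> y"
  proof
    assume "(1 + t) *\<^sub>R p - t *\<^sub>R y = y"
    then have "(1 + t) *\<^sub>R (p - y) = 0"
      by (simp add: algebra_simps)
    with assms show False
      by simp
  qed
  ultimately show ?thesis
    unfolding in_segment(2) by metis
qed

lemma eventually_extrapolation_pos:
  fixes a b :: real
  assumes "0 \<le> a" "a = 0 \<Longrightarrow> b < 0"
  shows "\<forall>\<^sub>F t in at_right 0. 0 < (1 + t) * a - t * b"
proof (cases "a = 0")
  case True
  show ?thesis
    using eventually_at_right_less[of "0 :: real"]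
    by eventually_elim (use True assms(2) in \<open>simp add: mult_pos_neg\<close>)
next
  case False
  have "((\<lambda>t. (1 + t) * a - t * b) \<longlongrightarrow> (1 + 0) * a - 0 * b) (at_right 0)"
    by (intro tendsto_intros)
  then show ?thesis
    by (rule order_tendstoD(1)) (use assms(1) False in simp)
qed

lemma width_dir_convex_hull_3:
  "width_dir (convex hull {a, b, c}) u =
     max (u \<bullet> a) (max (u \<bullet> b) (u \<bullet> c)) - min (u \<bullet> a) (min (u \<bullet> b) (u \<bullet> c))"
proof -
  let ?M = "max (u \<bullet> a) (max (u \<bullet> b) (u \<bullet> c))" and ?m = "min (u \<bullet> a) (min (u \<bullet> b) (u \<bullet> c))"
  have "convex hull {a, b, c} \<subseteq> {z. u \<bullet> z \<le> ?M}" "convex hull {a, b, c} \<subseteq> {z. ?m \<le> u \<bullet> z}"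
    by (intro hull_minimal; auto simp: convex_halfspace_le convex_halfspace_ge)+
  moreover have "?M \<in> (\<lambda>z. u \<bullet> z) ` (convex hull {a, b, c})"
    "?m \<in> (\<lambda>z. u \<bullet> z) ` (convex hull {a, b, c})"
    by (auto simp: hull_inc max_def min_def)
  ultimately have "(SUP z\<in>convex hull {a, b, c}. u \<bullet> z) = ?M" "(INF z\<in>convex hull {a, b, c}. u \<bullet> z) = ?m"
    by (auto intro!: cSup_eq_maximum cInf_eq_minimum)
  then show ?thesis
    by (simp add: width_dir_def)
qed

lemma max3_minus_min3:
  fixes a b c :: real
  shows "max a (max b c) - min a (min b c) = max \<bar>a - b\<bar> (max \<bar>a - c\<bar> \<bar>b - c\<bar>)"
  by (smt (verit))

section \<open>The bound \<open>1 + 2 / sqrt 3\<close>\<close>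

lemma sqrt3_cubic_identity:
  fixes m :: real
  defines "c \<equiv> 1 + 2 / sqrt 3"
  shows "c * (m ^ 3 + (1 - m) ^ 3) - m = 3 * c * (m - 1 / sqrt 3)\<^sup>2"
proof -
  define r where "r = 1 / sqrt 3"
  have "3 * r\<^sup>2 = 1"
    by (simp add: r_def power_divide)
  moreover have "c = 1 + 2 * r"
    by (simp add: c_def r_def)
  then have "c * (m ^ 3 + (1 - m) ^ 3) - m - 3 * c * (m - r)\<^sup>2 = (1 - 3 * r\<^sup>2) * (1 + 2 * r - 4 * m)"
    by (simp add: algebra_simps power2_eq_square power3_eq_cube)
  ultimately show ?thesis
    by (simp add: r_def)
qed

lemma le_sqrt3_bound_times_den:
  fixes m y1 y2 :: real
  assumes "0 < m" "y1 < 1" "y2 < 1" "m \<le> y1" "m \<le> y2" "1 < m + y1" "1 < m + y2"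
  defines "c \<equiv> 1 + 2 / sqrt 3" and "D \<equiv> m * y1 * y2 + (1 - m) * (1 - y1) * (1 - y2)"
  shows "m \<le> c * D \<and> (m = c * D \<longleftrightarrow> m = 1 / sqrt 3 \<and> y1 = 1 / sqrt 3 \<and> y2 = 1 / sqrt 3)"
proof -
  have "sqrt 3 < 2"
    using real_sqrt_less_mono[of 3 4] by simp
  then have half: "1 / 2 < 1 / sqrt 3" and c2: "2 < c"
    by (simp_all add: c_def field_simps)
  \<comment> \<open>For \<open>m \<ge> 1/2\<close>, \<open>D\<close> only grows as \<open>y1, y2\<close> move up from \<open>m\<close>, which reduces the claim to the
    cubic identity; for \<open>m < 1/2\<close> the estimate \<open>D > m (1 - m)\<close> and \<open>c > 2\<close> suffice.\<close>
  show ?thesis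
  proof (cases "1 / 2 \<le> m")
    case True
    define D0 where "D0 = m ^ 3 + (1 - m) ^ 3"
    have D_diff: "D - D0 = (y1 - m) * (y2 - 1 + m) + (y2 - m) * (2 * m - 1)"
      by (simp add: D_def D0_def algebra_simps power3_eq_cube)
    have nonneg: "0 \<le> (y1 - m) * (y2 - 1 + m)" "0 \<le> (y2 - m) * (2 * m - 1)"
      using assms True by simp_all
    have "c * D0 - m = 3 * c * (m - 1 / sqrt 3)\<^sup>2"
      unfolding D0_def c_def by (rule sqrt3_cubic_identity)
    then have key: "c * D - m = c * (D - D0) + 3 * c * (m - 1 / sqrt 3)\<^sup>2"
      by (simp add: algebra_simps)
    have "0 \<le> c * (D - D0)" "0 \<le> 3 * c * (m - 1 / sqrt 3)\<^sup>2"
      using D_diff nonneg c2 by simp_all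
    then have "m \<le> c * D"
      using key by linarith
    moreover have "m = c * D \<longleftrightarrow> m = 1 / sqrt 3 \<and> y1 = 1 / sqrt 3 \<and> y2 = 1 / sqrt 3"
    proof
      assume "m = c * D"
      then have "c * (D - D0) = 0" "3 * c * (m - 1 / sqrt 3)\<^sup>2 = 0"
        using key \<open>0 \<le> c * (D - D0)\<close> \<open>0 \<le> 3 * c * _\<close> by linarith+
      then have m: "m = 1 / sqrt 3" and "D - D0 = 0"
        using c2 by simp_all
      then have "(y1 - m) * (y2 - 1 + m) = 0" "(y2 - m) * (2 * m - 1) = 0"
        using D_diff nonneg by linarith+
      moreover have "y2 - 1 + m \<noteq> 0" "2 * m - 1 \<noteq> 0"
        using assms(7) half m by auto
      ultimately show "m = 1 / sqrt 3 \<and> y1 = 1 / sqrt 3 \<and> y2 = 1 / sqrt 3"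
        using m by simp
    next
      assume "m = 1 / sqrt 3 \<and> y1 = 1 / sqrt 3 \<and> y2 = 1 / sqrt 3"
      then have "D = D0" "m = 1 / sqrt 3"
        by (simp_all add: D_def D0_def power3_eq_cube)
      then show "m = c * D"
        using key by simp
    qed
    ultimately show ?thesis ..
  next
    case False
    have "D = m * (1 - m) + (y1 - (1 - m)) * (y2 - (1 - m))"
      by (simp add: D_def algebra_simps)
    moreover have "0 < (y1 - (1 - m)) * (y2 - (1 - m))"
      using assms by simp
    ultimately have "m * (1 - m) < D"
      by linarith
    then have "c * (m * (1 - m)) < c * D"
      using c2 by simp
    moreover have "m \<le> 2 * (m * (1 - m))"
      using False assms(1) by (simp add: algebra_simps)
    moreover have "2 * (m * (1 - m)) < c * (m * (1 - m))"
      using c2 assms(1) False by (intro mult_strict_right_mono) auto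
    ultimately show ?thesis
      using False half by auto
  qed
qed

lemma min_div_den_le_sqrt3_bound:
  fixes x0 x1 x2 :: real
  assumes "0 < x0" "x0 < 1" "0 < x1" "x1 < 1" "0 < x2" "x2 < 1"
    and "1 < x0 + x1" "1 < x0 + x2" "1 < x1 + x2"
  defines "D \<equiv> x0 * x1 * x2 + (1 - x0) * (1 - x1) * (1 - x2)"
  shows "min x0 (min x1 x2) / D \<le> 1 + 2 / sqrt 3 \<and>
    (min x0 (min x1 x2) / D = 1 + 2 / sqrt 3 \<longleftrightarrow>
       x0 = 1 / sqrt 3 \<and> x1 = 1 / sqrt 3 \<and> x2 = 1 / sqrt 3)"
proof -
  have "0 < D"
    unfolding D_def using assms by (intro add_pos_pos mult_pos_pos) auto
  then have div: "m / D \<le> 1 + 2 / sqrt 3 \<and> (m / D = 1 + 2 / sqrt 3 \<longleftrightarrow> P)"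
    if "m \<le> (1 + 2 / sqrt 3) * D \<and> (m = (1 + 2 / sqrt 3) * D \<longleftrightarrow> P)" for m P
    using that by (simp add: divide_le_eq divide_eq_eq mult.commute)
  consider "min x0 (min x1 x2) = x0" "x0 \<le> x1" "x0 \<le> x2"
    | "min x0 (min x1 x2) = x1" "x1 \<le> x0" "x1 \<le> x2"
    | "min x0 (min x1 x2) = x2" "x2 \<le> x0" "x2 \<le> x1"
    by linarith
  then show ?thesis
  proof cases
    case 1
    then show ?thesis
      using le_sqrt3_bound_times_den[of x0 x1 x2] assms by (intro div) (simp add: D_def)
  next
    case 2
    then show ?thesis
      using le_sqrt3_bound_times_den[of x1 x2 x0] assms
      by (intro div) (auto simp: D_def algebra_simps)
  next
    case 3
    then show ?thesis
      using le_sqrt3_bound_times_den[of x2 x0 x1] assms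
      by (intro div) (auto simp: D_def algebra_simps)
  qed
qed

section \<open>A triangle inscribed in \<open>Q\<close> without further lattice points\<close>

locale inscribed_empty_triangle =
  fixes p0 p1 p2 q0 q1 q2 :: "real \<times> real" and x0 x1 x2 :: real
  assumes int_p0: "int_pt p0" and int_p1: "int_pt p1" and int_p2: "int_pt p2"
    and not_collinear_P: "\<not> collinear {p0, p1, p2}"
    and int_pts_P: "{z. int_pt z \<and> z \<in> convex hull {p0, p1, p2}} = {p0, p1, p2}"
    and not_collinear_Q: "\<not> collinear {q0, q1, q2}"
    and p0_eq: "p0 = (1 - x0) *\<^sub>R q1 + x0 *\<^sub>R q2"
    and p1_eq: "p1 = (1 - x1) *\<^sub>R q2 + x1 *\<^sub>R q0"
    and p2_eq: "p2 = (1 - x2) *\<^sub>R q0 + x2 *\<^sub>R q1"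
    and x0_pos: "0 < x0" and x0_less_1: "x0 < 1"
    and x1_pos: "0 < x1" and x1_less_1: "x1 < 1"
    and x2_pos: "0 < x2" and x2_less_1: "x2 < 1"
begin

abbreviation "Q \<equiv> convex hull {q0, q1, q2}"

definition "v = p1 - p0"
definition "w = p2 - p0"
definition "d = det2 v w"

text \<open>\<open>lam0, lam1, lam2\<close> are the barycentric coordinates with respect to \<open>p0, p1, p2\<close>.\<close>

definition "lam1 z = det2 (z - p0) w / d"
definition "lam2 z = det2 v (z - p0) / d"
definition "lam0 z = 1 - lam1 z - lam2 z"

lemma d_neq_0: "d \<noteq> 0"
  using det2_neq_0_if_not_collinear[OF not_collinear_P] by (simp add: d_def v_def w_def)

lemma lam_decomp: "z = p0 + lam1 z *\<^sub>R v + lam2 z *\<^sub>R w"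
proof -
  have "z - p0 = (1 / d) *\<^sub>R (d *\<^sub>R (z - p0))"
    using d_neq_0 by simp
  also have "\<dots> = lam1 z *\<^sub>R v + lam2 z *\<^sub>R w"
    unfolding d_def det2_cramer[of v w] by (simp add: lam1_def lam2_def d_def scaleR_add_right)
  finally show ?thesis
    by (simp add: algebra_simps)
qed

lemma lam_of_decomp:
  "lam1 (p0 + a *\<^sub>R v + b *\<^sub>R w) = a" "lam2 (p0 + a *\<^sub>R v + b *\<^sub>R w) = b"
  using d_neq_0 by (simp_all add: lam1_def lam2_def d_def det2_def field_simps)

lemma barycentric_P: "z = lam0 z *\<^sub>R p0 + lam1 z *\<^sub>R p1 + lam2 z *\<^sub>R p2"
  by (subst lam_decomp) (simp add: lam0_def v_def w_def algebra_simps)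

lemma lam_vertices [simp]:
  "lam1 p0 = 0" "lam2 p0 = 0" "lam1 p1 = 1" "lam2 p1 = 0" "lam1 p2 = 0" "lam2 p2 = 1"
  using lam_of_decomp[of 0 0] lam_of_decomp[of 1 0] lam_of_decomp[of 0 1]
  by (simp_all add: v_def w_def)

lemma p_distinct: "p0 \<noteq> p1" "p1 \<noteq> p2" "p0 \<noteq> p2"
  using lam_vertices by force+

lemma int_pt_v: "int_pt v" and int_pt_w: "int_pt w"
  using int_p0 int_p1 int_p2 by (simp_all add: v_def w_def int_pt_diff)

lemma lattice_point_in_parallelogram:
  assumes "int_pt z" "0 \<le> lam1 z" "lam1 z < 1" "0 \<le> lam2 z" "lam2 z < 1"
  shows "z = p0"
proof -
  have vertex: "y \<in> {p0, p1, p2}"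
    if "int_pt y" "0 \<le> lam1 y" "0 \<le> lam2 y" "lam1 y + lam2 y \<le> 1" for y
  proof -
    have "y \<in> convex hull {p0, p1, p2}"
      unfolding convex_hull_3 using barycentric_P[of y] that(2-4)
      by (intro CollectI exI[of _ "lam0 y"] exI[of _ "lam1 y"] exI[of _ "lam2 y"])
        (auto simp: lam0_def)
    with int_pts_P that(1) show ?thesis
      by blast
  qed
  show ?thesis
  proof (cases "lam1 z + lam2 z \<le> 1")
    case True
    then show ?thesis
      using vertex[of z] assms by auto
  next
    case False
    \<comment> \<open>Then the reflection of \<open>z\<close> in the midpoint of \<open>p1 p2\<close> lies in \<open>P\<close>.\<close>
    define z' where "z' = p1 + p2 - z"
    have "z' = p0 + (1 - lam1 z) *\<^sub>R v + (1 - lam2 z) *\<^sub>R w"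
      unfolding z'_def by (subst (2) lam_decomp) (simp add: v_def w_def algebra_simps)
    then have "lam1 z' = 1 - lam1 z" "lam2 z' = 1 - lam2 z"
      by (simp_all add: lam_of_decomp)
    moreover have "int_pt z'"
      unfolding z'_def by (intro int_pt_diff int_pt_add int_p1 int_p2 assms(1))
    ultimately have "z' \<in> {p0, p1, p2}"
      using vertex[of z'] assms False by auto
    with \<open>lam1 z' = _\<close> \<open>lam2 z' = _\<close> assms show ?thesis
      by auto
  qed
qed

lemma lam_Ints:
  assumes "int_pt z"
  shows "lam1 z \<in> \<int>" "lam2 z \<in> \<int>" "lam0 z \<in> \<int>"
proof -
  define z0 where "z0 = p0 + frac (lam1 z) *\<^sub>R v + frac (lam2 z) *\<^sub>R w"
  have "z0 = z - of_int \<lfloor>lam1 z\<rfloor> *\<^sub>R v - of_int \<lfloor>lam2 z\<rfloor> *\<^sub>R w"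
    unfolding z0_def frac_def by (subst (3) lam_decomp) (simp add: algebra_simps)
  then have "int_pt z0"
    by (auto intro!: int_pt_diff int_pt_scaleR assms int_pt_v int_pt_w)
  moreover have lam_z0: "lam1 z0 = frac (lam1 z)" "lam2 z0 = frac (lam2 z)"
    by (simp_all add: z0_def lam_of_decomp)
  ultimately have "z0 = p0"
    by (intro lattice_point_in_parallelogram) (simp_all add: frac_lt_1)
  then show "lam1 z \<in> \<int>" "lam2 z \<in> \<int>"
    using lam_z0 by (simp_all flip: frac_eq_0_iff)
  then show "lam0 z \<in> \<int>"
    by (simp add: lam0_def)
qed

lemma abs_d: "\<bar>d\<bar> = 1"
proof -
  have "int_pt (p0 + (1, 0))" "int_pt (p0 + (0, 1))"
    using int_p0 by (simp_all add: int_pt_def)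
  from lam_Ints(1,2)[OF this(1)] lam_Ints(1,2)[OF this(2)]
  have "snd w / d \<in> \<int>" "snd v / d \<in> \<int>" "fst w / d \<in> \<int>" "fst v / d \<in> \<int>"
    by (simp_all add: lam1_def lam2_def det2_def)
  then have "(fst v / d) * (snd w / d) - (snd v / d) * (fst w / d) \<in> \<int>"
    by (intro Ints_diff Ints_mult)
  also have "(fst v / d) * (snd w / d) - (snd v / d) * (fst w / d) = det2 v w / (d * d)"
    by (simp add: det2_def diff_divide_distrib)
  also have "\<dots> = 1 / d"
    using d_neq_0 by (simp add: d_def)
  finally have "1 / d \<in> \<int>" .
  moreover have "d \<in> \<int>"
    using int_pt_v int_pt_w by (simp add: d_def det2_def int_pt_def)
  ultimately show ?thesis
    using abs_eq_1_if_inverse_Ints d_neq_0 by blast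
qed

text \<open>\<open>mu0, mu1, mu2\<close> are the barycentric coordinates with respect to \<open>q0, q1, q2\<close>;
  their expressions in terms of \<open>lam0, lam1, lam2\<close> come from substituting the assumed
  representations of \<open>p0, p1, p2\<close> into \<open>barycentric_P\<close>.\<close>

definition "mu0 z = x1 * lam1 z + (1 - x2) * lam2 z"
definition "mu1 z = x2 * lam2 z + (1 - x0) * lam0 z"
definition "mu2 z = x0 * lam0 z + (1 - x1) * lam1 z"

lemma mu_sum: "mu0 z + mu1 z + mu2 z = 1"
  by (simp add: mu0_def mu1_def mu2_def lam0_def algebra_simps)

lemma barycentric_Q: "z = mu0 z *\<^sub>R q0 + mu1 z *\<^sub>R q1 + mu2 z *\<^sub>R q2"
proof -
  have "a *\<^sub>R p0 + b *\<^sub>R p1 + c *\<^sub>R p2 =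
      (x1 * b + (1 - x2) * c) *\<^sub>R q0 + (x2 * c + (1 - x0) * a) *\<^sub>R q1
      + (x0 * a + (1 - x1) * b) *\<^sub>R q2" for a b c
    unfolding p0_eq p1_eq p2_eq by (simp add: algebra_simps)
  then show ?thesis
    using barycentric_P[of z] by (simp add: mu0_def mu1_def mu2_def)
qed

lemma mu_of_barycentric:
  assumes "a + b + c = 1"
  shows "mu0 (a *\<^sub>R q0 + b *\<^sub>R q1 + c *\<^sub>R q2) = a"
    "mu1 (a *\<^sub>R q0 + b *\<^sub>R q1 + c *\<^sub>R q2) = b"
    "mu2 (a *\<^sub>R q0 + b *\<^sub>R q1 + c *\<^sub>R q2) = c"
  using barycentric_coords_unique[OF not_collinear_Q mu_sum assms barycentric_Q[symmetric]] .

lemma mu_vertices [simp]: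
  "mu0 p0 = 0" "mu1 p0 = 1 - x0" "mu2 p0 = x0"
  "mu0 p1 = x1" "mu1 p1 = 0" "mu2 p1 = 1 - x1"
  "mu0 p2 = 1 - x2" "mu1 p2 = x2" "mu2 p2 = 0"
  using mu_of_barycentric[of 0 "1 - x0" x0] mu_of_barycentric[of x1 0 "1 - x1"]
    mu_of_barycentric[of "1 - x2" x2 0]
  by (simp_all add: p0_eq p1_eq p2_eq add.commute)

lemma mu_affine:
  assumes "a + b = 1"
  shows "mu0 (a *\<^sub>R y + b *\<^sub>R z) = a * mu0 y + b * mu0 z"
    "mu1 (a *\<^sub>R y + b *\<^sub>R z) = a * mu1 y + b * mu1 z"
    "mu2 (a *\<^sub>R y + b *\<^sub>R z) = a * mu2 y + b * mu2 z"
proof -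
  have "(a * mu0 y + b * mu0 z) *\<^sub>R q0 + (a * mu1 y + b * mu1 z) *\<^sub>R q1
      + (a * mu2 y + b * mu2 z) *\<^sub>R q2
      = a *\<^sub>R (mu0 y *\<^sub>R q0 + mu1 y *\<^sub>R q1 + mu2 y *\<^sub>R q2)
        + b *\<^sub>R (mu0 z *\<^sub>R q0 + mu1 z *\<^sub>R q1 + mu2 z *\<^sub>R q2)"
    by (simp add: algebra_simps)
  also have "\<dots> = a *\<^sub>R y + b *\<^sub>R z"
    by (simp flip: barycentric_Q)
  finally have comb: "(a * mu0 y + b * mu0 z) *\<^sub>R q0 + (a * mu1 y + b * mu1 z) *\<^sub>R q1
      + (a * mu2 y + b * mu2 z) *\<^sub>R q2 = a *\<^sub>R y + b *\<^sub>R z" .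
  have "(a * mu0 y + b * mu0 z) + (a * mu1 y + b * mu1 z) + (a * mu2 y + b * mu2 z)
      = a * (mu0 y + mu1 y + mu2 y) + b * (mu0 z + mu1 z + mu2 z)"
    by (simp add: algebra_simps)
  also have "\<dots> = 1"
    using assms by (simp add: mu_sum)
  finally show "mu0 (a *\<^sub>R y + b *\<^sub>R z) = a * mu0 y + b * mu0 z"
    "mu1 (a *\<^sub>R y + b *\<^sub>R z) = a * mu1 y + b * mu1 z"
    "mu2 (a *\<^sub>R y + b *\<^sub>R z) = a * mu2 y + b * mu2 z"
    by (simp_all flip: comb add: mu_of_barycentric)
qed

lemma Q_eq: "Q = {z. 0 \<le> mu0 z \<and> 0 \<le> mu1 z \<and> 0 \<le> mu2 z}"
proof (intro set_eqI iffI)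
  fix z
  assume "z \<in> Q"
  then show "z \<in> {z. 0 \<le> mu0 z \<and> 0 \<le> mu1 z \<and> 0 \<le> mu2 z}"
    unfolding convex_hull_3 by (auto simp: mu_of_barycentric)
next
  fix z
  assume "z \<in> {z. 0 \<le> mu0 z \<and> 0 \<le> mu1 z \<and> 0 \<le> mu2 z}"
  then show "z \<in> Q"
    unfolding convex_hull_3 using barycentric_Q[of z] mu_sum[of z] by blast
qed

lemma interior_Q_eq: "interior Q = {z. 0 < mu0 z \<and> 0 < mu1 z \<and> 0 < mu2 z}"
proof (intro set_eqI iffI)
  fix z
  assume "z \<in> interior Q"
  then show "z \<in> {z. 0 < mu0 z \<and> 0 < mu1 z \<and> 0 < mu2 z}"
    by (subst (asm) interior_convex_hull_3_minimal[OF not_collinear_Q])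
      (auto simp: mu_of_barycentric)
next
  fix z
  assume "z \<in> {z. 0 < mu0 z \<and> 0 < mu1 z \<and> 0 < mu2 z}"
  then have "\<exists>a>0. \<exists>b>0. \<exists>c>0. a + b + c = 1 \<and> a *\<^sub>R q0 + b *\<^sub>R q1 + c *\<^sub>R q2 = z"
    using barycentric_Q[of z, symmetric] mu_sum[of z]
    by blast
  then show "z \<in> interior Q"
    by (subst interior_convex_hull_3_minimal[OF not_collinear_Q]) simp_all
qed

lemma frontier_Q_eq: "frontier Q = Q - interior Q"
  by (simp add: frontier_def compact_imp_closed compact_convex_hull)

lemma p_frontier: "p0 \<in> frontier Q" "p1 \<in> frontier Q" "p2 \<in> frontier Q"
proof -
  have "{p0, p1, p2} \<subseteq> Q"
    unfolding Q_eq using x0_less_1 x1_less_1 x2_less_1 x0_pos x1_pos x2_pos by auto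
  moreover have "{p0, p1, p2} \<inter> interior Q = {}"
    unfolding interior_Q_eq by auto
  ultimately show "p0 \<in> frontier Q" "p1 \<in> frontier Q" "p2 \<in> frontier Q"
    unfolding frontier_Q_eq by auto
qed

lemma q_distinct: "q0 \<noteq> q1" "q1 \<noteq> q2" "q2 \<noteq> q0"
  using not_collinear_Q by (auto simp: insert_commute)

subsection \<open>Maximal lattice-freeness\<close>

abbreviation "pair_sums_gt_1 \<equiv> x0 + x1 > 1 \<and> x0 + x2 > 1 \<and> x1 + x2 > 1"
abbreviation "pair_sums_lt_1 \<equiv> x0 + x1 < 1 \<and> x0 + x2 < 1 \<and> x1 + x2 < 1"

lemma int_pt_in_Q_imp_vertex:
  assumes "int_pt z" "z \<in> Q" "pair_sums_gt_1 \<or> pair_sums_lt_1"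
  shows "z \<in> {p0, p1, p2}"
proof -
  obtain l0 l1 l2 :: int where l: "lam0 z = l0" "lam1 z = l1" "lam2 z = l2"
    using lam_Ints[OF assms(1)] by (metis Ints_cases)
  have "real_of_int (l0 + l1 + l2) = 1"
    using l by (simp add: lam0_def)
  then have sum: "l0 + l1 + l2 = 1"
    by linarith
  have "0 \<le> x1 * l1 + (1 - x2) * l2" "0 \<le> x2 * l2 + (1 - x0) * l0" "0 \<le> x0 * l0 + (1 - x1) * l1"
    using assms(2) l unfolding Q_eq mu0_def mu1_def mu2_def by auto
  then have "0 \<le> l0" "0 \<le> l1" "0 \<le> l2"
    using lattice_coord_nonneg[of l0 l1 l2 x0 x1 x2] lattice_coord_nonneg[of l1 l2 l0 x1 x2 x0]
      lattice_coord_nonneg[of l2 l0 l1 x2 x0 x1] sum assms(3)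
      x0_pos x0_less_1 x1_pos x1_less_1 x2_pos x2_less_1
    by (auto simp: add_ac)
  with sum have "(l0, l1, l2) \<in> {(1, 0, 0), (0, 1, 0), (0, 0, 1)}"
    by auto
  then show ?thesis
    using barycentric_P[of z] l by auto
qed

lemma lattice_free_Q:
  assumes "pair_sums_gt_1 \<or> pair_sums_lt_1"
  shows "lattice_free Q"
  unfolding lattice_free_def
proof (intro conjI allI impI)
  show "closed Q" "convex Q"
    by (simp_all add: compact_imp_closed compact_convex_hull)
  have "(1/3) *\<^sub>R q0 + (1/3) *\<^sub>R q1 + (1/3) *\<^sub>R q2 \<in> interior Q"
    unfolding interior_Q_eq by (simp add: mu_of_barycentric)
  then show "interior Q \<noteq> {}"
    by blast
  fix z
  assume "int_pt z"
  then show "z \<notin> interior Q"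
    using int_pt_in_Q_imp_vertex[OF _ _ assms] p_frontier interior_subset
    unfolding frontier_Q_eq by blast
qed

lemma eventually_extrapolation_in_interior_Q:
  assumes "0 \<le> mu0 p" "0 \<le> mu1 p" "0 \<le> mu2 p"
    and "mu0 p = 0 \<Longrightarrow> mu0 y < 0" "mu1 p = 0 \<Longrightarrow> mu1 y < 0" "mu2 p = 0 \<Longrightarrow> mu2 y < 0"
  shows "\<forall>\<^sub>F t in at_right 0. (1 + t) *\<^sub>R p - t *\<^sub>R y \<in> interior Q"
proof -
  have "(1 + t) *\<^sub>R p - t *\<^sub>R y = (1 + t) *\<^sub>R p + (- t) *\<^sub>R y" for t
    by simp
  then have mu_ext:
    "mu0 ((1 + t) *\<^sub>R p - t *\<^sub>R y) = (1 + t) * mu0 p - t * mu0 y"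
    "mu1 ((1 + t) *\<^sub>R p - t *\<^sub>R y) = (1 + t) * mu1 p - t * mu1 y"
    "mu2 ((1 + t) *\<^sub>R p - t *\<^sub>R y) = (1 + t) * mu2 p - t * mu2 y" for t
    using mu_affine[of "1 + t" "- t" p y] by simp_all
  have "\<forall>\<^sub>F t in at_right 0. 0 < (1 + t) * mu0 p - t * mu0 y"
    "\<forall>\<^sub>F t in at_right 0. 0 < (1 + t) * mu1 p - t * mu1 y"
    "\<forall>\<^sub>F t in at_right 0. 0 < (1 + t) * mu2 p - t * mu2 y"
    by (rule eventually_extrapolation_pos; use assms in simp)+
  then show ?thesis
    unfolding interior_Q_eq by eventually_elim (simp add: mu_ext)
qed

text \<open>If \<open>y \<in> K\<close> lies beyond the edge of \<open>Q\<close> through \<open>p\<close>, then \<open>p\<close> lies strictly between \<open>y\<close>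
  and a point of \<open>interior Q \<subseteq> interior K\<close>.\<close>

lemma not_lattice_free_if_beyond_Q:
  assumes "lattice_free K" "Q \<subseteq> K" "y \<in> K" "int_pt p" "p \<noteq> y"
    and "\<forall>\<^sub>F t in at_right 0. (1 + t) *\<^sub>R p - t *\<^sub>R y \<in> interior Q"
  shows False
proof -
  obtain t where t: "0 < t" "(1 + t) *\<^sub>R p - t *\<^sub>R y \<in> interior Q"
    using eventually_happens'[OF _ eventually_conj[OF eventually_at_right_less assms(6)]] by auto
  then have "(1 + t) *\<^sub>R p - t *\<^sub>R y \<in> interior K"
    using interior_mono[OF assms(2)] by blast
  moreover have "p \<in> open_segment ((1 + t) *\<^sub>R p - t *\<^sub>R y) y"
    using t(1) assms(5) by (rule open_segment_extrapolation)
  moreover have "convex K"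
    using assms(1) by (simp add: lattice_free_def)
  ultimately have "p \<in> interior K"
    using in_interior_closure_convex_segment closure_subset assms(3) by blast
  with assms(1,4) show False
    unfolding lattice_free_def by blast
qed

lemma max_lattice_free_Q:
  assumes "pair_sums_gt_1 \<or> pair_sums_lt_1"
  shows "max_lattice_free Q"
  unfolding max_lattice_free_def
proof (intro conjI allI impI)
  show "lattice_free Q"
    using assms by (rule lattice_free_Q)
  fix K
  assume K: "lattice_free K \<and> Q \<subseteq> K"
  have "y \<in> Q" if "y \<in> K" for y
  proof (rule ccontr)
    assume "y \<notin> Q"
    then consider "mu0 y < 0" | "mu1 y < 0" | "mu2 y < 0"
      unfolding Q_eq by force
    then have "\<exists>p\<in>{p0, p1, p2}. \<forall>\<^sub>F t in at_right 0. (1 + t) *\<^sub>R p - t *\<^sub>R y \<in> interior Q"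
    proof cases
      case 1
      then have "\<forall>\<^sub>F t in at_right 0. (1 + t) *\<^sub>R p0 - t *\<^sub>R y \<in> interior Q"
        using x0_pos x0_less_1 by (intro eventually_extrapolation_in_interior_Q) simp_all
      then show ?thesis
        by blast
    next
      case 2
      then have "\<forall>\<^sub>F t in at_right 0. (1 + t) *\<^sub>R p1 - t *\<^sub>R y \<in> interior Q"
        using x1_pos x1_less_1 by (intro eventually_extrapolation_in_interior_Q) simp_all
      then show ?thesis
        by blast
    next
      case 3
      then have "\<forall>\<^sub>F t in at_right 0. (1 + t) *\<^sub>R p2 - t *\<^sub>R y \<in> interior Q"
        using x2_pos x2_less_1 by (intro eventually_extrapolation_in_interior_Q) simp_all
      then show ?thesis
        by blast
    qed
    then obtain p where "p \<in> {p0, p1, p2}"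
      and "\<forall>\<^sub>F t in at_right 0. (1 + t) *\<^sub>R p - t *\<^sub>R y \<in> interior Q"
      by blast
    moreover have "p \<noteq> y" "int_pt p"
      using \<open>p \<in> {p0, p1, p2}\<close> \<open>y \<notin> Q\<close> p_frontier frontier_Q_eq int_p0 int_p1 int_p2 by auto
    ultimately show False
      using not_lattice_free_if_beyond_Q K that by blast
  qed
  with K show "K = Q"
    by blast
qed

lemma int_pts_frontier_Q:
  assumes "pair_sums_gt_1 \<or> pair_sums_lt_1"
  shows "{z. int_pt z \<and> z \<in> frontier Q} = {p0, p1, p2}"
  using int_pt_in_Q_imp_vertex[OF _ _ assms] p_frontier int_p0 int_p1 int_p2 frontier_Q_eq
  by auto

lemma type3_if_pair_sums:
  assumes "pair_sums_gt_1 \<or> pair_sums_lt_1"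
  shows "max_lf_triangle_type3 Q"
proof -
  have "card {z. int_pt z \<and> z \<in> frontier Q} = 3"
    unfolding int_pts_frontier_Q[OF assms] using p_distinct by simp
  moreover have "p2 \<in> open_segment q0 q1" "p0 \<in> open_segment q1 q2" "p1 \<in> open_segment q2 q0"
    unfolding in_segment using q_distinct p0_eq p1_eq p2_eq
      x0_pos x0_less_1 x1_pos x1_less_1 x2_pos x2_less_1 by auto
  ultimately show ?thesis
    unfolding max_lf_triangle_type3_def
    using max_lattice_free_Q[OF assms] not_collinear_Q int_p0 int_p1 int_p2 by blast
qed

lemma lattice_point_not_in_type3_Q:
  assumes "max_lf_triangle_type3 Q" "a \<in> \<int>" "b \<in> \<int>" "(a, b) \<notin> {(0, 0), (1, 0), (0, 1)}"
  shows "p0 + a *\<^sub>R v + b *\<^sub>R w \<notin> Q"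
proof
  define r where "r = p0 + a *\<^sub>R v + b *\<^sub>R w"
  assume "r \<in> Q"
  have "lattice_free Q" and card3: "card {z. int_pt z \<and> z \<in> frontier Q} = 3"
    using assms(1) by (auto simp: max_lf_triangle_type3_def max_lattice_free_def)
  have "int_pt r"
    unfolding r_def by (intro int_pt_add int_pt_scaleR int_p0 int_pt_v int_pt_w assms(2,3))
  with \<open>lattice_free Q\<close> \<open>r \<in> Q\<close> have "r \<in> frontier Q"
    unfolding lattice_free_def frontier_Q_eq by blast
  have "r \<notin> {p0, p1, p2}"
  proof
    assume "r \<in> {p0, p1, p2}"
    then have "(lam1 r, lam2 r) \<in> {(0, 0), (1, 0), (0, 1)}"
      by auto
    with assms(4) show False
      by (auto simp: r_def lam_of_decomp)
  qed
  have "{p0, p1, p2, r} \<subseteq> {z. int_pt z \<and> z \<in> frontier Q}"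
    using \<open>int_pt r\<close> \<open>r \<in> frontier Q\<close> p_frontier int_p0 int_p1 int_p2 by auto
  moreover have "card {p0, p1, p2, r} = 4"
    using \<open>r \<notin> {p0, p1, p2}\<close> p_distinct by auto
  ultimately show False
    using card3 card_mono[of "{z. int_pt z \<and> z \<in> frontier Q}" "{p0, p1, p2, r}"]
    by (cases "finite {z. int_pt z \<and> z \<in> frontier Q}") auto
qed

lemma mu_decomp:
  "mu0 (p0 + a *\<^sub>R v + b *\<^sub>R w) = x1 * a + (1 - x2) * b"
  "mu1 (p0 + a *\<^sub>R v + b *\<^sub>R w) = x2 * b + (1 - x0) * (1 - a - b)"
  "mu2 (p0 + a *\<^sub>R v + b *\<^sub>R w) = x0 * (1 - a - b) + (1 - x1) * a"
  by (simp_all add: mu0_def mu1_def mu2_def lam0_def lam_of_decomp)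

lemma pair_sums_if_type3:
  assumes "max_lf_triangle_type3 Q"
  shows "pair_sums_gt_1 \<or> pair_sums_lt_1"
proof (rule ccontr)
  assume "\<not> ?thesis"
  \<comment> \<open>Then one of the reflections \<open>p1 + p2 - p0\<close>, \<open>p2 + p0 - p1\<close>, \<open>p0 + p1 - p2\<close> lies in \<open>Q\<close>.\<close>
  then consider "x0 + x2 \<ge> 1" "x0 + x1 \<le> 1" | "x0 + x1 \<ge> 1" "x1 + x2 \<le> 1" | "x1 + x2 \<ge> 1" "x0 + x2 \<le> 1"
    by linarith
  then show False
  proof cases
    case 1
    then have "p0 + 1 *\<^sub>R v + 1 *\<^sub>R w \<in> Q"
      unfolding Q_eq using mu_decomp[of "1" "1"] x1_pos x2_less_1 by simp
    then show False
      using lattice_point_not_in_type3_Q[OF assms, of 1 1] by simp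
  next
    case 2
    then have "p0 + (- 1) *\<^sub>R v + 1 *\<^sub>R w \<in> Q"
      unfolding Q_eq using mu_decomp[of "- 1" "1"] x2_pos x0_less_1 by simp
    then show False
      using lattice_point_not_in_type3_Q[OF assms, of "- 1" 1] by simp
  next
    case 3
    then have "p0 + 1 *\<^sub>R v + (- 1) *\<^sub>R w \<in> Q"
      unfolding Q_eq using mu_decomp[of "1" "- 1"] x0_pos x1_less_1 by simp
    then show False
      using lattice_point_not_in_type3_Q[OF assms, of 1 "- 1"] by simp
  qed
qed

subsection \<open>Lattice width\<close>

definition "den = x0 * x1 * x2 + (1 - x0) * (1 - x1) * (1 - x2)"

lemma den_pos: "0 < den"
  unfolding den_def using x0_pos x0_less_1 x1_pos x1_less_1 x2_pos x2_less_1
  by (intro add_pos_pos mult_pos_pos) auto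

lemma den_edge_vectors:
  "den *\<^sub>R (q0 - q1) = x0 *\<^sub>R v + (1 - x0 - x1) *\<^sub>R w"
  "den *\<^sub>R (q0 - q2) = (x0 + x2 - 1) *\<^sub>R v + (1 - x0) *\<^sub>R w"
  "den *\<^sub>R (q1 - q2) = x1 *\<^sub>R w - (1 - x2) *\<^sub>R v"
  unfolding den_def v_def w_def unfolding p0_eq p1_eq p2_eq
  by (simp_all add: prod_eq_iff algebra_simps)

text \<open>\<open>edge_width (u \<bullet> v) (u \<bullet> w)\<close> is \<open>den\<close> times the largest of the differences
  \<open>u \<bullet> qi - u \<bullet> qj\<close>, by \<open>den_edge_vectors\<close>.\<close>

definition "edge_width A B =
  max \<bar>x0 * A + (1 - x0 - x1) * B\<bar> (max \<bar>(x0 + x2 - 1) * A + (1 - x0) * B\<bar> \<bar>x1 * B - (1 - x2) * A\<bar>)"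

lemma inner_edge_vectors:
  "u \<bullet> q0 - u \<bullet> q1 = (x0 * (u \<bullet> v) + (1 - x0 - x1) * (u \<bullet> w)) / den"
  "u \<bullet> q0 - u \<bullet> q2 = ((x0 + x2 - 1) * (u \<bullet> v) + (1 - x0) * (u \<bullet> w)) / den"
  "u \<bullet> q1 - u \<bullet> q2 = (x1 * (u \<bullet> w) - (1 - x2) * (u \<bullet> v)) / den"
proof -
  have "den * (u \<bullet> q0 - u \<bullet> q1) = x0 * (u \<bullet> v) + (1 - x0 - x1) * (u \<bullet> w)"
    "den * (u \<bullet> q0 - u \<bullet> q2) = (x0 + x2 - 1) * (u \<bullet> v) + (1 - x0) * (u \<bullet> w)"
    "den * (u \<bullet> q1 - u \<bullet> q2) = x1 * (u \<bullet> w) - (1 - x2) * (u \<bullet> v)"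
    using den_edge_vectors[THEN arg_cong, of "(\<bullet>) u"]
    by (simp_all add: inner_diff_right inner_add_right)
  with den_pos show "u \<bullet> q0 - u \<bullet> q1 = (x0 * (u \<bullet> v) + (1 - x0 - x1) * (u \<bullet> w)) / den"
    "u \<bullet> q0 - u \<bullet> q2 = ((x0 + x2 - 1) * (u \<bullet> v) + (1 - x0) * (u \<bullet> w)) / den"
    "u \<bullet> q1 - u \<bullet> q2 = (x1 * (u \<bullet> w) - (1 - x2) * (u \<bullet> v)) / den"
    by (simp_all add: eq_divide_eq mult.commute)
qed

lemma width_dir_Q: "width_dir Q u = edge_width (u \<bullet> v) (u \<bullet> w) / den"
  using den_pos
  by (simp add: width_dir_convex_hull_3 max3_minus_min3 inner_edge_vectors edge_width_def
      abs_divide max_divide_distrib_right)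

lemma inner_v_w_not_both_0:
  assumes "u \<noteq> 0"
  shows "u \<bullet> v \<noteq> 0 \<or> u \<bullet> w \<noteq> 0"
proof -
  have "d * (u \<bullet> u) = u \<bullet> (det2 v w *\<^sub>R u)"
    by (simp add: d_def)
  also have "\<dots> = det2 u w * (u \<bullet> v) + det2 v u * (u \<bullet> w)"
    unfolding det2_cramer[of v w u] by (simp add: inner_add_right)
  finally have eq: "d * (u \<bullet> u) = det2 u w * (u \<bullet> v) + det2 v u * (u \<bullet> w)" .
  show ?thesis
  proof (rule ccontr)
    assume "\<not> (u \<bullet> v \<noteq> 0 \<or> u \<bullet> w \<noteq> 0)"
    with eq have "d * (u \<bullet> u) = 0"
      by simp
    with d_neq_0 assms show False
      by simp
  qed
qed

lemma exists_dual_lattice_point: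
  fixes A B :: int
  shows "\<exists>u. int_pt u \<and> u \<bullet> v = A \<and> u \<bullet> w = B"
proof -
  define u0 where "u0 = (A * snd w - B * snd v, B * fst v - A * fst w)"
  have "u0 \<bullet> v = A * d" "u0 \<bullet> w = B * d"
    by (simp_all add: u0_def inner_prod_def d_def det2_def algebra_simps)
  then have "(u0 /\<^sub>R d) \<bullet> v = A" "(u0 /\<^sub>R d) \<bullet> w = B"
    using d_neq_0 by simp_all
  moreover have "int_pt u0"
    using int_pt_v int_pt_w by (simp add: u0_def int_pt_def)
  moreover have "d = 1 \<or> d = -1"
    using abs_d by auto
  then have "int_pt (u0 /\<^sub>R d) = int_pt u0"
    by (auto simp: int_pt_def)
  ultimately show ?thesis
    by blast
qed

lemma min_le_edge_width_pos:
  fixes A B :: int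
  assumes "pair_sums_gt_1" "0 < A \<or> A = 0 \<and> 0 < B"
  shows "min x0 (min x1 x2) \<le> edge_width A B"
proof -
  consider "A = 0" "1 \<le> B" | "1 \<le> A" "1 \<le> B" | "1 \<le> A" "B \<le> 0"
    using assms(2) by linarith
  then show ?thesis
  proof cases
    case 1
    then have "x1 \<le> x1 * B"
      using x1_pos by simp
    then show ?thesis
      using 1 by (simp add: edge_width_def)
  next
    case 2
    then have "x0 + x2 - 1 \<le> (x0 + x2 - 1) * A" "1 - x0 \<le> (1 - x0) * B"
      using assms(1) x0_less_1 by simp_all
    then show ?thesis
      unfolding edge_width_def by linarith
  next
    case 3
    then have "x0 \<le> x0 * A" "0 \<le> (x0 + x1 - 1) * - B"
      using assms(1) x0_pos by (simp, intro mult_nonneg_nonneg) auto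
    moreover have "(1 - x0 - x1) * B = (x0 + x1 - 1) * - B"
      by (simp add: algebra_simps)
    ultimately show ?thesis
      unfolding edge_width_def by linarith
  qed
qed

lemma edge_width_uminus: "edge_width (- A) (- B) = edge_width A B"
proof -
  have "a * - A + b * - B = - (a * A + b * B)" "a * - B - b * - A = - (a * B - b * A)" for a b
    by simp_all
  then show ?thesis
    by (simp only: edge_width_def abs_minus_cancel)
qed

lemma min_le_edge_width:
  fixes A B :: int
  assumes "pair_sums_gt_1" "A \<noteq> 0 \<or> B \<noteq> 0"
  shows "min x0 (min x1 x2) \<le> edge_width A B"
proof (cases "0 < A \<or> A = 0 \<and> 0 < B")
  case True
  with assms(1) show ?thesis
    by (rule min_le_edge_width_pos)
next
  case False
  with assms(2) have "0 < - A \<or> - A = 0 \<and> 0 < - B"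
    by linarith
  with assms(1) have "min x0 (min x1 x2) \<le> edge_width (of_int (- A)) (of_int (- B))"
    by (rule min_le_edge_width_pos)
  then show ?thesis
    by (simp add: edge_width_uminus)
qed

lemma edge_width_basis:
  assumes "pair_sums_gt_1"
  shows "edge_width 1 0 = x0" "edge_width 0 1 = x1" "edge_width 1 1 = x2"
  unfolding edge_width_def using assms x0_pos x0_less_1 x1_pos x1_less_1 x2_pos x2_less_1
  by (simp_all add: max_def abs_if)

lemma lattice_width_Q:
  assumes "pair_sums_gt_1"
  shows "lattice_width Q = min x0 (min x1 x2) / den"
  unfolding lattice_width_def
proof (rule cInf_eq_minimum)
  have "min x0 (min x1 x2) \<in> {x0, x1, x2}"
    by (simp add: min_def)
  then consider "min x0 (min x1 x2) = x0" | "min x0 (min x1 x2) = x1" | "min x0 (min x1 x2) = x2"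
    by blast
  then obtain A B :: int where "A \<noteq> 0 \<or> B \<noteq> 0" "edge_width A B = min x0 (min x1 x2)"
  proof cases
    case 1
    then show ?thesis
      using that[of 1 0] edge_width_basis[OF assms] by simp
  next
    case 2
    then show ?thesis
      using that[of 0 1] edge_width_basis[OF assms] by simp
  next
    case 3
    then show ?thesis
      using that[of 1 1] edge_width_basis[OF assms] by simp
  qed
  moreover obtain u where "int_pt u" "u \<bullet> v = A" "u \<bullet> w = B"
    using exists_dual_lattice_point by blast
  ultimately show "min x0 (min x1 x2) / den \<in> width_dir Q ` {u. int_pt u \<and> u \<noteq> 0}"
    by (auto simp: width_dir_Q intro!: image_eqI[of _ _ u])
next
  fix y
  assume "y \<in> width_dir Q ` {u. int_pt u \<and> u \<noteq> 0}"
  then obtain u where u: "int_pt u" "u \<noteq> 0" "y = width_dir Q u"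
    by blast
  obtain A B :: int where "u \<bullet> v = A" "u \<bullet> w = B"
    using inner_int_pt_Ints[OF u(1) int_pt_v] inner_int_pt_Ints[OF u(1) int_pt_w]
    by (metis Ints_cases)
  moreover have "A \<noteq> 0 \<or> B \<noteq> 0"
    using inner_v_w_not_both_0[OF u(2)] calculation by auto
  ultimately show "min x0 (min x1 x2) / den \<le> y"
    using min_le_edge_width[OF assms] den_pos by (simp add: u(3) width_dir_Q divide_right_mono)
qed

end

theorem lemma13:
  fixes p0 p1 p2 q0 q1 q2 :: "real \<times> real" and x0 x1 x2 :: real
  assumes "int_pt p0" "int_pt p1" "int_pt p2"
    and "\<not> collinear {p0, p1, p2}"
    and "{z. int_pt z \<and> z \<in> convex hull {p0, p1, p2}} = {p0, p1, p2}"
    and "\<not> collinear {q0, q1, q2}"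
    and "p0 = (1 - x0) *\<^sub>R q1 + x0 *\<^sub>R q2"
    and "p1 = (1 - x1) *\<^sub>R q2 + x1 *\<^sub>R q0"
    and "p2 = (1 - x2) *\<^sub>R q0 + x2 *\<^sub>R q1"
    and "0 < x0" "x0 < 1" "0 < x1" "x1 < 1" "0 < x2" "x2 < 1"
  shows "(max_lf_triangle_type3 (convex hull {q0, q1, q2}) \<longleftrightarrow>
            ((x0 + x1 > 1 \<and> x0 + x2 > 1 \<and> x1 + x2 > 1) \<or>
             (x0 + x1 < 1 \<and> x0 + x2 < 1 \<and> x1 + x2 < 1)))
       \<and> ((x0 + x1 > 1 \<and> x0 + x2 > 1 \<and> x1 + x2 > 1) \<longrightarrow>
            lattice_width (convex hull {q0, q1, q2}) =
              Min {x0, x1, x2} / (x0 * x1 * x2 + (1 - x0) * (1 - x1) * (1 - x2)))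
       \<and> ((x0 + x1 > 1 \<and> x0 + x2 > 1 \<and> x1 + x2 > 1) \<longrightarrow>
            lattice_width (convex hull {q0, q1, q2}) \<le> 1 + 2 / sqrt 3 \<and>
            (lattice_width (convex hull {q0, q1, q2}) = 1 + 2 / sqrt 3 \<longleftrightarrow>
               x0 = 1 / sqrt 3 \<and> x1 = 1 / sqrt 3 \<and> x2 = 1 / sqrt 3))"
proof -
  interpret inscribed_empty_triangle p0 p1 p2 q0 q1 q2 x0 x1 x2
    using assms by unfold_locales
  have width: "lattice_width Q = Min {x0, x1, x2} / (x0 * x1 * x2 + (1 - x0) * (1 - x1) * (1 - x2))"
    if "pair_sums_gt_1"
    using lattice_width_Q[OF that] by (simp add: den_def min.assoc)
  show ?thesis
    using type3_if_pair_sums pair_sums_if_type3 width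
      min_div_den_le_sqrt3_bound[OF assms(10-15)]
    by (auto simp: min.assoc)
qed

end
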